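(* Let $|q|<1$ and let $(\alpha_n,\beta_n)$ be a Bailey pair with respect to $a$, with $|aq|<1$, no denominator vanishing, and all series converging absolutely. Then $$\sum_{n=1}^{\infty} (q;q)_{n-1}(-a)^{n}q^{n(n+1)/2}\beta_n - \sum_{n=1}^{\infty}\frac{(q;q)_{n-1}(-a)^{n}q^{n(n+1)/2}}{(q a ;q)_n}\alpha_n=f_2(a,q),$$ where $f_2(a,q)$ is given by each of the following (equal) expressions: $$f_2(a,q)=-\sum_{n=1}^{\infty} \frac{(1-a q^{2n})q^{n^2} a^{n}}{(1-a q^{n})(1-q^n)}=\sum_{n=1}^{\infty} \frac{q^{n(n+1)/2}(-a)^{n}}{(q a;q)_{n}(1-q^n)}=-\sum_{n=1}^{\infty}\frac{a q^n}{1-aq^n}.$$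
   Context: Notation: $(x;q)_n=(1-x)(1-xq)\cdots(1-xq^{n-1})$, $(x;q)_0=1$. A Bailey pair with respect to $a$ (base $q$) is a pair of sequences $(\alpha_n,\beta_n)_{n\ge0}$ with $\alpha_0=\beta_0=1$ and, for $n>0$, $\beta_n=\sum_{j=0}^{n}\frac{\alpha_j}{(q;q)_{n-j}(aq;q)_{n+j}}$. *)

theory Defs
  imports "HOL-Analysis.Analysis"
begin

definition qpoch :: "complex \<Rightarrow> complex \<Rightarrow> nat \<Rightarrow> complex" where
  "qpoch x q n = (\<Prod>k<n. 1 - x * q ^ k)"

definition bailey_pair :: "complex \<Rightarrow> complex \<Rightarrow> (nat \<Rightarrow> complex) \<Rightarrow> (nat \<Rightarrow> complex) \<Rightarrow> bool" where
  "bailey_pair a q \<alpha> \<beta> \<longleftrightarrow>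
     \<alpha> 0 = 1 \<and> \<beta> 0 = 1 \<and>
     (\<forall>n>0. \<beta> n = (\<Sum>j=0..n. \<alpha> j / (qpoch q q (n - j) * qpoch (a * q) q (n + j))))"

end

theory Submission
  imports Defs
begin

text \<open>Write \<open>c\<^sub>n = (q;q)\<^bsub>n-1\<^esub> (-a)\<^sup>n q\<^bsup>n(n+1)/2\<^esup>\<close>. Inserting the Bailey relation turns
  \<open>\<Sum>\<^sub>n\<^sub>\<ge>\<^sub>1 c\<^sub>n \<beta>\<^sub>n\<close> into the absolutely convergent double series
  \<open>\<Sum>\<^sub>j\<^sub>,\<^sub>m c\<^bsub>j+m\<^esub> \<alpha>\<^sub>j / ((q;q)\<^sub>m (aq;q)\<^bsub>2j+m\<^esub>)\<close>. For \<open>j \<ge> 1\<close> the sum over \<open>m\<close> is a limiting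
  case of the q-Gauss sum and equals \<open>c\<^sub>j / (aq;q)\<^sub>j\<close>, which produces the \<open>\<alpha>\<close>-series; the row
  \<open>j = 0\<close>, where \<open>\<alpha>\<^sub>0 = 1\<close>, is what is left over, and it is the second expression for \<open>f\<^sub>2\<close>.
  Both the first and the second expression, regarded as functions \<open>F(a)\<close>, satisfy
  \<open>F(a) - F(aq) = \<plusminus>aq/(1 - aq)\<close> because the difference telescopes in \<open>n\<close>; since also
  \<open>F(aq\<^sup>k) \<rightarrow> 0\<close>, telescoping in \<open>k\<close> identifies them with the Lambert series.\<close>

section \<open>Triangular numbers and bounds for q-Pochhammer symbols\<close>

definition tri :: "nat \<Rightarrow> nat" where
  "tri n = n * (n + 1) div 2"

lemma tri_0 [simp]: "tri 0 = 0"
  by (simp add: tri_def)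

lemma tri_Suc: "tri (Suc n) = tri n + Suc n"
  unfolding tri_def by (induction n) auto

lemma tri_add: "tri (j + m) = tri j + j * m + tri m"
  by (induction m) (simp_all add: tri_Suc)

lemma tri_le_square: "tri n \<le> n ^ 2"
  unfolding tri_def power2_eq_square by (induction n) auto

lemma summable_power_tri:
  fixes L r :: real
  assumes "0 \<le> L" "0 \<le> r" "r < 1"
  shows "summable (\<lambda>m. L ^ m * r ^ tri m)"
proof -
  have "(\<lambda>n. L * r ^ Suc n) \<longlonglongrightarrow> L * 0"
    by (intro tendsto_mult tendsto_const LIMSEQ_Suc[OF LIMSEQ_power_zero]) (use assms in simp)
  then obtain N where N: "\<And>n. n \<ge> N \<Longrightarrow> L * r ^ Suc n < 1/2"
    by (metis (no_types, lifting) eventually_sequentially order_tendstoD(2) mult_zero_right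
        divide_pos_pos zero_less_one zero_less_numeral)
  show ?thesis
  proof (rule summable_ratio_test[of "1/2" N])
    fix n assume "n \<ge> N"
    have "norm (L ^ Suc n * r ^ tri (Suc n)) = (L * r ^ Suc n) * (L ^ n * r ^ tri n)"
      using assms by (simp add: tri_Suc power_add abs_mult)
    also have "\<dots> \<le> 1/2 * (L ^ n * r ^ tri n)"
      using N[OF \<open>n \<ge> N\<close>] assms by (intro mult_right_mono) auto
    also have "\<dots> = 1/2 * norm (L ^ n * r ^ tri n)"
      using assms by simp
    finally show "norm (L ^ Suc n * r ^ tri (Suc n)) \<le> 1/2 * norm (L ^ n * r ^ tri n)" .
  qed simp
qed

lemma norm_mult_power_le:
  fixes x q :: "'a :: real_normed_div_algebra"
  assumes "norm q \<le> 1"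
  shows "norm (x * q ^ k) \<le> norm x"
  using assms by (simp add: norm_mult norm_power mult_left_le power_le_one)

lemma norm_one_minus_mult_power_ge:
  fixes x q :: "'a :: real_normed_div_algebra"
  assumes "norm q \<le> 1"
  shows "1 - norm x \<le> norm (1 - x * q ^ k)"
  using norm_mult_power_le[OF assms, of x k] norm_triangle_ineq2[of 1 "x * q ^ k"] by simp

lemma one_minus_mult_power_nonzero:
  fixes x q :: "'a :: real_normed_div_algebra"
  assumes "norm q \<le> 1" "norm x < 1"
  shows "1 - x * q ^ k \<noteq> 0"
  using norm_one_minus_mult_power_ge[OF assms(1), of x k] assms(2) by auto

lemma qpoch_0 [simp]: "qpoch x q 0 = 1"
  by (simp add: qpoch_def)

lemma qpoch_Suc: "qpoch x q (Suc n) = qpoch x q n * (1 - x * q ^ n)"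
  by (simp add: qpoch_def)

lemma qpoch_add: "qpoch x q (m + n) = qpoch x q m * qpoch (x * q ^ m) q n"
  by (induction n) (simp_all add: qpoch_Suc power_add mult.assoc)

lemma qpoch_Suc_left: "qpoch x q (Suc n) = (1 - x) * qpoch (x * q) q n"
  using qpoch_add[of x q 1 n] by (simp add: qpoch_def)

lemma exp_neg_div_le_one_minus:
  fixes t :: real
  assumes "0 \<le> t" "t < 1"
  shows "exp (- (t / (1 - t))) \<le> 1 - t"
proof -
  have "1 / (1 - t) = 1 + t / (1 - t)"
    using assms by (simp add: field_simps)
  also have "\<dots> \<le> exp (t / (1 - t))"
    by (rule exp_ge_add_one_self)
  finally show ?thesis
    using assms by (simp add: exp_minus field_simps)
qed

lemma sum_power_le_geometric:
  fixes r :: real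
  assumes "0 \<le> r" "r < 1"
  shows "(\<Sum>k<n. r ^ k) \<le> 1 / (1 - r)"
  using assms by (simp add: sum_gp_strict divide_right_mono)

lemma norm_qpoch_le:
  assumes "norm q < 1" "norm x \<le> s"
  shows "norm (qpoch x q n) \<le> exp (s / (1 - norm q))"
proof -
  have s: "0 \<le> s" using assms(2) norm_ge_zero order_trans by blast
  have "norm (qpoch x q n) \<le> (\<Prod>k<n. exp (s * norm q ^ k))"
    unfolding qpoch_def
  proof (rule order_trans[OF norm_prod_le prod_mono])
    fix k
    have "norm (1 - x * q ^ k) \<le> 1 + norm x * norm q ^ k"
      using norm_triangle_ineq4[of 1 "x * q ^ k"] by (simp add: norm_mult norm_power)
    also have "\<dots> \<le> 1 + s * norm q ^ k"
      using assms by (simp add: mult_right_mono)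
    also have "\<dots> \<le> exp (s * norm q ^ k)"
      by simp
    finally show "0 \<le> norm (1 - x * q ^ k) \<and> norm (1 - x * q ^ k) \<le> exp (s * norm q ^ k)"
      by simp
  qed
  also have "\<dots> = exp (s * (\<Sum>k<n. norm q ^ k))"
    by (simp add: exp_sum sum_distrib_left)
  also have "\<dots> \<le> exp (s * (1 / (1 - norm q)))"
    using assms s sum_power_le_geometric[of "norm q" n] by (intro exp_mono mult_left_mono) auto
  finally show ?thesis by simp
qed

lemma norm_qpoch_ge:
  assumes "norm q < 1" "norm x \<le> s" "s < 1"
  shows "exp (- (s / ((1 - s) * (1 - norm q)))) \<le> norm (qpoch x q n)"
proof -
  have s: "0 \<le> s" using assms(2) norm_ge_zero order_trans by blast
  have "s / (1 - s) * (\<Sum>k<n. norm q ^ k) \<le> s / (1 - s) * (1 / (1 - norm q))"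
    using assms s sum_power_le_geometric[of "norm q" n] by (intro mult_left_mono) auto
  then have "exp (- (s / ((1 - s) * (1 - norm q)))) \<le> exp (- (s / (1 - s) * (\<Sum>k<n. norm q ^ k)))"
    by simp
  also have "\<dots> = (\<Prod>k<n. exp (- (s * norm q ^ k / (1 - s))))"
    by (simp add: exp_sum[symmetric] sum_negf sum_distrib_left)
  also have "\<dots> \<le> (\<Prod>k<n. norm (1 - x * q ^ k))"
  proof (rule prod_mono)
    fix k
    define t where "t = s * norm q ^ k"
    have "0 \<le> t" "t \<le> s"
      unfolding t_def using assms s by (auto simp: mult_left_le power_le_one)
    then have t: "0 \<le> t" "t \<le> s" "t < 1"
      using assms by auto
    have "exp (- (s * norm q ^ k / (1 - s))) \<le> exp (- (t / (1 - t)))"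
      unfolding t_def[symmetric] using t assms by (auto intro!: divide_left_mono)
    also have "\<dots> \<le> 1 - t"
      using t by (intro exp_neg_div_le_one_minus) auto
    also have "\<dots> \<le> 1 - norm (x * q ^ k)"
      using assms unfolding t_def by (simp add: norm_mult norm_power mult_right_mono)
    also have "\<dots> \<le> norm (1 - x * q ^ k)"
      using norm_triangle_ineq2[of 1 "x * q ^ k"] by simp
    finally show "0 \<le> exp (- (s * norm q ^ k / (1 - s))) \<and>
        exp (- (s * norm q ^ k / (1 - s))) \<le> norm (1 - x * q ^ k)"
      by simp
  qed
  also have "\<dots> = norm (qpoch x q n)"
    unfolding qpoch_def by (simp add: prod_norm)
  finally show ?thesis .
qed

lemma qpoch_bounded_below:
  assumes "norm q < 1" "s < 1"
  obtains \<delta> where "\<delta> > 0" "\<And>x n. norm x \<le> s \<Longrightarrow> \<delta> \<le> norm (qpoch x q n)"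
  using norm_qpoch_ge[OF assms(1) _ assms(2)] exp_gt_zero by blast

lemma qpoch_nonzero:
  assumes "norm q < 1" "norm x < 1"
  shows "qpoch x q n \<noteq> 0"
  using norm_qpoch_ge[OF assms(1) order_refl assms(2), of n] exp_gt_zero[of "- _"] by force

section \<open>A limiting case of the q-Gauss summation\<close>

definition gauss_limit_term :: "complex \<Rightarrow> complex \<Rightarrow> nat \<Rightarrow> nat \<Rightarrow> complex" where
  "gauss_limit_term q A j m =
     qpoch (q ^ j) q m * (- A) ^ m * q ^ tri m / (qpoch q q m * qpoch (A * q ^ (j + 1)) q m)"

lemma gauss_limit_term_recurrence:
  assumes "norm q < 1" "norm (A * q) < 1"
  shows "(1 - A * q ^ (j + k + 2)) * gauss_limit_term q A (j + 1) (Suc k)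
           + A * q ^ (j + k + 1) * gauss_limit_term q A (j + 1) k
         = (1 - A * q ^ (j + 1)) * gauss_limit_term q A j (Suc k)"
proof -
  define y z where "y = q ^ k" and "z = q ^ j"
  define P Q R Z where "P = qpoch (q * z) q k" and "Q = qpoch q q k"
    and "R = qpoch (A * q * q * z) q k" and "Z = (- A) ^ k * q ^ tri k"
  define u v t where "u = 1 - q * y" and "v = 1 - A * q * q * z * y" and "t = 1 - A * q * z"
  have small: "norm (A * q * q ^ i) < 1" for i
    using norm_mult_power_le[of q "A * q" i] assms by simp
  have nonzero: "Q \<noteq> 0" "u \<noteq> 0" "R \<noteq> 0" "v \<noteq> 0" "t \<noteq> 0"
    using qpoch_nonzero[OF assms(1) assms(1)] qpoch_nonzero[OF assms(1) small[of "Suc j"]] assms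
      one_minus_mult_power_nonzero[of q q k] one_minus_mult_power_nonzero[of q "A * q" "Suc (j + k)"]
      one_minus_mult_power_nonzero[of q "A * q" j]
    unfolding Q_def u_def R_def v_def t_def y_def z_def by (auto simp: power_add mult_ac)
  have "gauss_limit_term q A (j + 1) (Suc k) = P * (1 - q * z * y) * Z * (- A * q * y) / (Q * u * (R * v))"
    "gauss_limit_term q A (j + 1) k = P * Z / (Q * R)"
    unfolding gauss_limit_term_def P_def Q_def R_def Z_def u_def v_def y_def z_def
    by (simp_all add: qpoch_Suc tri_Suc power_add mult_ac)
  moreover have "gauss_limit_term q A j (Suc k) = (1 - z) * P * Z * (- A * q * y) / (Q * u * (t * R))"
    unfolding gauss_limit_term_def qpoch_Suc_left[of "q ^ j"] qpoch_Suc_left[of "A * q ^ (j + 1)"]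
      qpoch_Suc[of q q] P_def Q_def R_def Z_def u_def t_def y_def z_def
    by (simp add: tri_Suc power_add mult_ac)
  moreover have "1 - A * q ^ (j + k + 2) = v" "A * q ^ (j + k + 1) = A * q * z * y"
    "1 - A * q ^ (j + 1) = t"
    unfolding v_def t_def y_def z_def by (simp_all add: power_add numeral_2_eq_2 mult_ac)
  ultimately show ?thesis
    using nonzero by (simp only:) (simp add: field_simps, simp add: u_def algebra_simps)
qed

lemma gauss_limit_term_bound:
  assumes "norm q < 1" "norm (A * q) < 1"
  obtains K where "\<And>m. norm (gauss_limit_term q A j m) \<le> K * (norm A ^ m * norm q ^ tri m)"
proof -
  obtain \<delta>1 where "\<delta>1 > 0" "\<And>x n. norm x \<le> norm q \<Longrightarrow> \<delta>1 \<le> norm (qpoch x q n)"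
    using qpoch_bounded_below[OF assms(1) assms(1)] by blast
  then have \<delta>1: "\<delta>1 > 0" "\<And>m. \<delta>1 \<le> norm (qpoch q q m)"
    by auto
  obtain \<delta>2 where "\<delta>2 > 0" "\<And>x n. norm x \<le> norm (A * q) \<Longrightarrow> \<delta>2 \<le> norm (qpoch x q n)"
    using qpoch_bounded_below[OF assms] by blast
  moreover have "norm (A * q ^ (j + 1)) \<le> norm (A * q)"
    using norm_mult_power_le[of q "A * q" j] assms by (simp add: mult_ac)
  ultimately have \<delta>2: "\<delta>2 > 0" "\<And>m. \<delta>2 \<le> norm (qpoch (A * q ^ (j + 1)) q m)"
    by auto
  define M where "M = exp (1 / (1 - norm q))"
  have "0 \<le> M"
    unfolding M_def by simp
  have M: "norm (qpoch (q ^ j) q m) \<le> M" for m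
    unfolding M_def using assms by (intro norm_qpoch_le) (auto simp: norm_power power_le_one)
  have "norm (gauss_limit_term q A j m) \<le> M / (\<delta>1 * \<delta>2) * (norm A ^ m * norm q ^ tri m)" for m
  proof -
    have "norm (gauss_limit_term q A j m) = norm (qpoch (q ^ j) q m) * (norm A ^ m * norm q ^ tri m) /
        (norm (qpoch q q m) * norm (qpoch (A * q ^ (j + 1)) q m))"
      by (simp add: gauss_limit_term_def norm_mult norm_divide norm_power)
    also have "\<dots> \<le> M * (norm A ^ m * norm q ^ tri m) / (\<delta>1 * \<delta>2)"
      using \<delta>1 \<delta>2 M \<open>0 \<le> M\<close> by (intro frac_le mult_right_mono mult_mono) auto
    finally show ?thesis by simp
  qed
  then show thesis by (rule that)
qed

lemma summable_gauss_limit_term: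
  assumes "norm q < 1" "norm (A * q) < 1"
  shows "summable (gauss_limit_term q A j)"
proof -
  obtain K where K: "\<And>m. norm (gauss_limit_term q A j m) \<le> K * (norm A ^ m * norm q ^ tri m)"
    using gauss_limit_term_bound[OF assms] by blast
  have "summable (\<lambda>m. K * (norm A ^ m * norm q ^ tri m))"
    using assms by (intro summable_mult summable_power_tri) auto
  then show ?thesis
    by (rule summable_comparison_test') (rule K)
qed

lemma gauss_limit_term_0: "gauss_limit_term q A 0 m = (if m = 0 then 1 else 0)"
  by (cases m) (simp_all add: gauss_limit_term_def qpoch_Suc_left)

text \<open>This is the limit \<open>b \<rightarrow> \<infinity>\<close> of the q-Gauss sum with parameters \<open>q\<^sup>j, b, A q\<^bsup>j+1\<^esup>\<close>.
  It is proved by induction on \<open>j\<close>: by the recurrence, the terms for \<open>j + 1\<close> differ from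
  \<open>1 - A q\<^bsup>j+1\<^esup>\<close> times those for \<open>j\<close> by a telescoping sequence.\<close>

lemma gauss_limit_term_sums:
  assumes "norm q < 1" "norm (A * q) < 1"
  shows "gauss_limit_term q A j sums qpoch (A * q) q j"
proof (induction j)
  case 0
  show ?case
    using sums_single[of 0 "\<lambda>_. 1::complex"] by (simp add: gauss_limit_term_0[abs_def])
next
  case (Suc j)
  define E where "E m = (if m = 0 then 0 else A * q ^ (j + m) * gauss_limit_term q A (j + 1) (m - 1))"
    for m
  have step: "gauss_limit_term q A (Suc j) m
      = (1 - A * q ^ (j + 1)) * gauss_limit_term q A j m + (E (Suc m) - E m)" for m
  proof (cases m)
    case 0
    then show ?thesis by (simp add: E_def gauss_limit_term_def)
  next
    case (Suc k)
    then show ?thesis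
      using gauss_limit_term_recurrence[OF assms, of j k] by (simp add: E_def algebra_simps)
  qed
  have "(\<lambda>m. q ^ m * gauss_limit_term q A (j + 1) m) \<longlonglongrightarrow> 0 * 0"
    by (intro tendsto_mult LIMSEQ_power_zero[OF assms(1)]
        summable_LIMSEQ_zero[OF summable_gauss_limit_term[OF assms]])
  then have "(\<lambda>m. A * q ^ Suc j * (q ^ m * gauss_limit_term q A (j + 1) m)) \<longlonglongrightarrow> 0"
    using tendsto_mult_left[of _ 0 sequentially "A * q ^ Suc j"] by simp
  then have "(\<lambda>m. E (Suc m)) \<longlonglongrightarrow> 0"
    by (simp add: E_def power_add mult_ac)
  then have "(\<lambda>m. (1 - A * q ^ (j + 1)) * gauss_limit_term q A j m + (E (Suc m) - E m))
      sums ((1 - A * q ^ (j + 1)) * qpoch (A * q) q j + (0 - E 0))"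
    by (intro sums_add sums_mult Suc.IH telescope_sums[OF LIMSEQ_imp_Suc])
  moreover have "(1 - A * q ^ (j + 1)) * qpoch (A * q) q j + (0 - E 0) = qpoch (A * q) q (Suc j)"
    by (simp add: E_def qpoch_Suc mult_ac)
  ultimately show ?case
    unfolding step[abs_def, symmetric] by simp
qed

section \<open>Inserting the Bailey pair\<close>

definition bailey_coeff :: "complex \<Rightarrow> complex \<Rightarrow> nat \<Rightarrow> complex" where
  "bailey_coeff a q n = qpoch q q (n - 1) * (- a) ^ n * q ^ tri n"

definition bailey_weight :: "complex \<Rightarrow> complex \<Rightarrow> nat \<Rightarrow> nat \<Rightarrow> complex" where
  "bailey_weight a q n j = 1 / (qpoch q q (n - j) * qpoch (a * q) q (n + j))"

lemma bailey_pair_beta: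
  assumes "bailey_pair a q \<alpha> \<beta>" "n > 0"
  shows "\<beta> n = (\<Sum>j\<le>n. \<alpha> j * bailey_weight a q n j)"
  using assms by (simp add: bailey_pair_def bailey_weight_def atLeast0AtMost)

lemma bailey_coeff_Suc:
  assumes "n \<ge> 1"
  shows "bailey_coeff a q (Suc n) = bailey_coeff a q n * ((1 - q ^ n) * (- a) * q ^ Suc n)"
  using assms by (cases n) (simp_all add: bailey_coeff_def qpoch_Suc tri_Suc power_add mult_ac)

lemma norm_bailey_coeff_add_le:
  assumes "norm q < 1" "j \<ge> 1"
  shows "norm (bailey_coeff a q (j + m)) \<le> norm (bailey_coeff a q j) * ((2 * norm a) ^ m * norm q ^ tri m)"
proof (induction m)
  case 0
  then show ?case by simp
next
  case (Suc m)
  have "norm (1 - q ^ (j + m)) \<le> 2"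
    using norm_triangle_ineq4[of 1 "q ^ (j + m)"] power_le_one[of "norm q" "j + m"] assms
    by (simp add: norm_power)
  moreover have "norm q ^ Suc (j + m) \<le> norm q ^ Suc m"
    using assms by (intro power_decreasing) auto
  ultimately have step: "norm (1 - q ^ (j + m)) * norm a * norm q ^ Suc (j + m) \<le> 2 * norm a * norm q ^ Suc m"
    by (intro mult_mono) auto
  have "norm (bailey_coeff a q (j + Suc m))
      = norm (bailey_coeff a q (j + m)) * (norm (1 - q ^ (j + m)) * norm a * norm q ^ Suc (j + m))"
    using bailey_coeff_Suc[of "j + m" a q] assms by (simp add: norm_mult norm_power)
  also have "\<dots> \<le> (norm (bailey_coeff a q j) * ((2 * norm a) ^ m * norm q ^ tri m)) * (2 * norm a * norm q ^ Suc m)"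
    by (rule mult_mono[OF Suc.IH step]) auto
  finally show ?case
    by (simp add: tri_Suc power_add mult_ac)
qed

lemma bailey_weight_bounded:
  assumes "norm q < 1" "norm (a * q) < 1"
  obtains W where "W \<ge> 0" "\<And>n j. norm (bailey_weight a q n j) \<le> W"
proof -
  obtain \<delta>1 where "\<delta>1 > 0" and \<delta>1: "\<And>x n. norm x \<le> norm q \<Longrightarrow> \<delta>1 \<le> norm (qpoch x q n)"
    using qpoch_bounded_below[OF assms(1) assms(1)] by blast
  obtain \<delta>2 where "\<delta>2 > 0" and \<delta>2: "\<And>x n. norm x \<le> norm (a * q) \<Longrightarrow> \<delta>2 \<le> norm (qpoch x q n)"
    using qpoch_bounded_below[OF assms] by blast
  have "norm (bailey_weight a q n j) \<le> 1 / (\<delta>1 * \<delta>2)" for n j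
    unfolding bailey_weight_def norm_divide norm_mult norm_one
    using \<delta>1[OF order_refl, of "n - j"] \<delta>2[OF order_refl, of "n + j"] \<open>\<delta>1 > 0\<close> \<open>\<delta>2 > 0\<close>
    by (intro divide_left_mono mult_mono mult_pos_pos) auto
  then show thesis
    using that[of "1 / (\<delta>1 * \<delta>2)"] \<open>\<delta>1 > 0\<close> \<open>\<delta>2 > 0\<close> by simp
qed

text \<open>Up to a factor independent of \<open>m\<close>, the terms are those of the q-summation with
  \<open>A = a q\<^sup>j\<close>.\<close>

lemma bailey_row_sums:
  assumes "norm q < 1" "norm (a * q) < 1" "j \<ge> 1"
  shows "(\<lambda>m. bailey_coeff a q (j + m) * bailey_weight a q (j + m) j)
           sums (bailey_coeff a q j / qpoch (a * q) q j)"
proof -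
  define A where "A = a * q ^ j"
  define K where "K = bailey_coeff a q j / qpoch (a * q) q (j + j)"
  have Aq: "A * q = a * q * q ^ j"
    unfolding A_def by (simp add: mult_ac)
  have "norm (A * q) < 1"
    unfolding Aq using norm_mult_power_le[of q "a * q" j] assms by simp
  then have "(\<lambda>m. K * gauss_limit_term q A j m) sums (K * qpoch (A * q) q j)"
    by (intro sums_mult gauss_limit_term_sums assms(1))
  moreover have "K * qpoch (A * q) q j = bailey_coeff a q j / qpoch (a * q) q j"
    using qpoch_add[of "a * q" q j j] qpoch_nonzero[OF assms(1,2), of "j + j"]
    unfolding K_def Aq by (auto simp: field_simps)
  moreover have "bailey_coeff a q (j + m) * bailey_weight a q (j + m) j = K * gauss_limit_term q A j m" for m
  proof -
    obtain i where "j = Suc i"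
      using assms(3) by (cases j) auto
    then have "qpoch q q (j + m - 1) = qpoch q q (j - 1) * qpoch (q ^ j) q m"
      using qpoch_add[of q q i m] by simp
    moreover have "qpoch (a * q) q (j + m + j) = qpoch (a * q) q (j + j) * qpoch (A * q ^ (j + 1)) q m"
      using qpoch_add[of "a * q" q "j + j" m] by (simp add: A_def power_add mult_ac add_ac)
    moreover have "(- a) ^ (j + m) * q ^ tri (j + m) = ((- a) ^ j * q ^ tri j) * ((- A) ^ m * q ^ tri m)"
      unfolding A_def minus_mult_left power_mult_distrib by (simp add: tri_add power_add power_mult mult_ac)
    ultimately show ?thesis
      unfolding bailey_coeff_def bailey_weight_def gauss_limit_term_def K_def
      by (simp add: mult_ac)
  qed
  ultimately show ?thesis
    by simp
qed

lemma summable_on_product_nonneg: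
  fixes u b :: "nat \<Rightarrow> real"
  assumes "\<And>j. 0 \<le> u j" "\<And>m. 0 \<le> b m" "summable u" "summable b"
  shows "(\<lambda>(j, m). u j * b m) summable_on UNIV"
proof -
  have "((\<lambda>m. u j * b m) has_sum (u j * suminf b)) UNIV" for j
    using assms by (intro norm_summable_imp_has_sum sums_mult summable_sums) (auto intro: summable_mult)
  moreover have "(\<lambda>j. u j * suminf b) summable_on UNIV"
    using assms by (subst summable_on_UNIV_nonneg_real_iff) (auto intro!: summable_mult2 mult_nonneg_nonneg suminf_nonneg)
  ultimately show ?thesis
    using summable_on_SigmaI[where A=UNIV and B="\<lambda>_. UNIV" and f="\<lambda>(j, m). u j * b m"
        and g="\<lambda>j. u j * suminf b"] assms
    by auto
qed

lemma double_series_rows_diagonals: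
  fixes G :: "nat \<times> nat \<Rightarrow> complex"
  assumes abs: "(\<lambda>p. norm (G p)) summable_on UNIV"
  shows "summable (\<lambda>m. G (j, m))"
    and "(\<lambda>j. \<Sum>m. G (j, m)) sums (\<Sum>\<^sub>\<infinity>p. G p)"
    and "(\<lambda>n. \<Sum>k\<le>n. G (k, n - k)) sums (\<Sum>\<^sub>\<infinity>p. G p)"
proof -
  have G: "(G has_sum (\<Sum>\<^sub>\<infinity>p. G p)) UNIV"
    using abs_summable_summable[OF abs] by (rule has_sum_infsum)
  have "(\<lambda>(j, m). norm (G (j, m))) = (\<lambda>p. norm (G p))"
    by auto
  then have rows: "summable (\<lambda>m. norm (G (j, m)))" for j
    using summable_on_SigmaD1[of "\<lambda>j m. norm (G (j, m))" UNIV "\<lambda>_. UNIV" j] abs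
    by (simp add: summable_on_UNIV_nonneg_real_iff)
  then show "summable (\<lambda>m. G (j, m))"
    by (rule summable_norm_cancel)
  have "((\<lambda>m. G (j, m)) has_sum (\<Sum>m. G (j, m))) UNIV" for j
    using norm_summable_imp_has_sum[OF rows summable_sums[OF summable_norm_cancel[OF rows]]] .
  then have "((\<lambda>j. \<Sum>m. G (j, m)) has_sum (\<Sum>\<^sub>\<infinity>p. G p)) UNIV"
    using has_sum_Sigma'[where A=UNIV and B="\<lambda>_. UNIV" and f=G and b="\<lambda>j. \<Sum>m. G (j, m)"] G
    by simp
  then show "(\<lambda>j. \<Sum>m. G (j, m)) sums (\<Sum>\<^sub>\<infinity>p. G p)"
    by (rule has_sum_imp_sums)
  have "((\<lambda>(n, k). G (k, n - k)) has_sum (\<Sum>\<^sub>\<infinity>p. G p)) (SIGMA n:UNIV. {..n})"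
    using G by (rule has_sum_reindex_bij_witness[where i="\<lambda>(k, m). (k + m, k)" and j="\<lambda>(n, k). (k, n - k)",
          THEN iffD2, rotated -1]) auto
  then have "((\<lambda>n. \<Sum>k\<le>n. G (k, n - k)) has_sum (\<Sum>\<^sub>\<infinity>p. G p)) UNIV"
    by (rule has_sum_Sigma') auto
  then show "(\<lambda>n. \<Sum>k\<le>n. G (k, n - k)) sums (\<Sum>\<^sub>\<infinity>p. G p)"
    by (rule has_sum_imp_sums)
qed

text \<open>The entry \<open>(0, 0)\<close> would belong to \<open>\<beta>\<^sub>0\<close>, which is not part of the series.\<close>

definition bailey_double_term :: "complex \<Rightarrow> complex \<Rightarrow> (nat \<Rightarrow> complex) \<Rightarrow> nat \<times> nat \<Rightarrow> complex" where
  "bailey_double_term a q \<alpha> =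
     (\<lambda>(j, m). if j + m = 0 then 0 else bailey_coeff a q (j + m) * \<alpha> j * bailey_weight a q (j + m) j)"

text \<open>The term \<open>(j, m)\<close> is dominated by \<open>\<bar>\<alpha>\<^sub>j c\<^sub>j\<bar> (2\<bar>a\<bar>)\<^sup>m \<bar>q\<bar>\<^bsup>m(m+1)/2\<^esup>\<close>, and
  \<open>\<Sum>\<bar>\<alpha>\<^sub>j c\<^sub>j\<bar>\<close> converges because \<open>(aq;q)\<^sub>j\<close> is bounded; in row \<open>0\<close> the index of \<open>m\<close> is shifted by one.\<close>

lemma abs_summable_bailey_double_term:
  assumes hq: "norm q < 1" and haq: "norm (a * q) < 1" and "\<alpha> 0 = 1"
    and h\<alpha>: "summable (\<lambda>n. norm (bailey_coeff a q (Suc n) / qpoch (a * q) q (Suc n) * \<alpha> (Suc n)))"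
  shows "(\<lambda>p. norm (bailey_double_term a q \<alpha> p)) summable_on UNIV"
proof -
  obtain W where "W \<ge> 0" and W: "\<And>n j. norm (bailey_weight a q n j) \<le> W"
    using bailey_weight_bounded[OF hq haq] by blast
  define d where "d m = (2 * norm a) ^ m * norm q ^ tri m" for m
  define b where "b m = d m + d (m - 1)" for m
  define u where "u j = (if j = 0 then norm (bailey_coeff a q 1) else norm (\<alpha> j) * norm (bailey_coeff a q j))" for j
  have d: "0 \<le> d m" "summable d" for m
    unfolding d_def by (simp, rule summable_power_tri) (use hq in auto)
  then have b: "0 \<le> b m" "summable b" for m
    unfolding b_def using summable_Suc_iff[of "\<lambda>m. d (m - 1)"] by (auto intro: summable_add)
  define M where "M = exp (norm (a * q) / (1 - norm q))"
  have "summable (\<lambda>j. u (Suc j))"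
  proof (rule summable_comparison_test'[OF summable_mult[OF h\<alpha>, of M]])
    fix j
    let ?t = "bailey_coeff a q (Suc j) / qpoch (a * q) q (Suc j) * \<alpha> (Suc j)"
    have "norm (u (Suc j)) = norm ?t * norm (qpoch (a * q) q (Suc j))"
      using qpoch_nonzero[OF hq haq, of "Suc j"] by (simp add: u_def norm_mult norm_divide)
    also have "\<dots> \<le> norm ?t * M"
      unfolding M_def using hq by (intro mult_left_mono norm_qpoch_le) auto
    finally show "norm (u (Suc j)) \<le> M * norm ?t"
      by (simp add: mult.commute)
  qed
  then have u: "0 \<le> u j" "summable u" for j
    by (simp_all add: u_def summable_Suc_iff[of u, symmetric])
  have bound: "norm (bailey_double_term a q \<alpha> (j, m)) \<le> W * u j * b m" for j m
  proof (cases "j = 0")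
    case True
    show ?thesis
    proof (cases m)
      case 0
      then show ?thesis using True \<open>W \<ge> 0\<close> u b by (simp add: bailey_double_term_def)
    next
      case (Suc k)
      have "norm (bailey_double_term a q \<alpha> (j, m))
          = norm (bailey_coeff a q (1 + k)) * norm (bailey_weight a q (Suc k) 0)"
        using True Suc \<open>\<alpha> 0 = 1\<close> by (simp add: bailey_double_term_def norm_mult)
      also have "\<dots> \<le> (u j * d k) * W"
        using True norm_bailey_coeff_add_le[OF hq, of 1 a k] W unfolding d_def u_def
        by (intro mult_mono) auto
      also have "\<dots> = W * u j * d k"
        by (simp add: mult_ac)
      also have "\<dots> \<le> W * u j * b m"
        using Suc \<open>W \<ge> 0\<close> u d by (intro mult_left_mono) (auto simp: b_def)
      finally show ?thesis .
    qed
  next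
    case False
    have "norm (bailey_double_term a q \<alpha> (j, m))
        = norm (bailey_coeff a q (j + m)) * norm (\<alpha> j) * norm (bailey_weight a q (j + m) j)"
      using False by (simp add: bailey_double_term_def norm_mult)
    also have "\<dots> \<le> (norm (bailey_coeff a q j) * d m) * norm (\<alpha> j) * W"
      using False norm_bailey_coeff_add_le[OF hq, of j a m] W unfolding d_def
      by (intro mult_mono) auto
    also have "\<dots> = W * u j * d m"
      using False by (simp add: u_def mult_ac)
    also have "\<dots> \<le> W * u j * b m"
      using \<open>W \<ge> 0\<close> u d by (intro mult_left_mono) (auto simp: b_def)
    finally show ?thesis .
  qed
  have "(\<lambda>(j, m). W * u j * b m) summable_on UNIV"
    using summable_on_product_nonneg[of "\<lambda>j. W * u j" b] \<open>W \<ge> 0\<close> u b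
    by (simp add: summable_mult)
  then show ?thesis
    by (rule summable_on_comparison_test) (use bound in \<open>auto simp: split_beta\<close>)
qed

lemma bailey_pair_insertion:
  assumes hq: "norm q < 1" and haq: "norm (a * q) < 1" and hbp: "bailey_pair a q \<alpha> \<beta>"
    and h\<alpha>: "summable (\<lambda>n. norm (bailey_coeff a q (Suc n) / qpoch (a * q) q (Suc n) * \<alpha> (Suc n)))"
  shows "(\<lambda>n. bailey_coeff a q (Suc n) * \<beta> (Suc n)) sums
           ((\<Sum>n. bailey_coeff a q (Suc n) / qpoch (a * q) q (Suc n) * \<alpha> (Suc n))
            + (\<Sum>n. bailey_coeff a q (Suc n) * bailey_weight a q (Suc n) 0))"
proof -
  define G where "G = bailey_double_term a q \<alpha>"
  have "\<alpha> 0 = 1"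
    using hbp by (simp add: bailey_pair_def)
  then have G: "(\<lambda>p. norm (G p)) summable_on UNIV"
    unfolding G_def using abs_summable_bailey_double_term[OF hq haq _ h\<alpha>] by blast
  have "(\<lambda>j. \<Sum>m. G (j, m)) sums (\<Sum>\<^sub>\<infinity>p. G p)"
    using double_series_rows_diagonals(2)[OF G] .
  moreover have "(\<Sum>m. G (Suc j, m)) = bailey_coeff a q (Suc j) / qpoch (a * q) q (Suc j) * \<alpha> (Suc j)" for j
  proof -
    have "(\<lambda>m. G (Suc j, m)) sums (\<alpha> (Suc j) * (bailey_coeff a q (Suc j) / qpoch (a * q) q (Suc j)))"
      using sums_mult[OF bailey_row_sums[OF hq haq, of "Suc j"], of "\<alpha> (Suc j)"]
      by (simp add: G_def bailey_double_term_def mult_ac)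
    then show ?thesis
      by (simp add: sums_iff mult_ac)
  qed
  moreover have "(\<Sum>m. G (0, m)) = (\<Sum>n. bailey_coeff a q (Suc n) * bailey_weight a q (Suc n) 0)"
  proof -
    have "(\<lambda>m. G (0, m)) sums (\<Sum>m. G (0, m))"
      by (rule summable_sums[OF double_series_rows_diagonals(1)[OF G]])
    then have "(\<lambda>n. G (0, Suc n)) sums (\<Sum>m. G (0, m))"
      by (subst sums_Suc_iff) (simp add: G_def bailey_double_term_def)
    then show ?thesis
      using \<open>\<alpha> 0 = 1\<close> by (simp add: sums_iff G_def bailey_double_term_def)
  qed
  ultimately have "(\<lambda>j. bailey_coeff a q (Suc j) / qpoch (a * q) q (Suc j) * \<alpha> (Suc j)) sums
      ((\<Sum>\<^sub>\<infinity>p. G p) - (\<Sum>n. bailey_coeff a q (Suc n) * bailey_weight a q (Suc n) 0))"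
    using sums_Suc_iff[of "\<lambda>j. \<Sum>m. G (j, m)"] by simp
  moreover have "(\<Sum>k\<le>Suc n. G (k, Suc n - k)) = bailey_coeff a q (Suc n) * \<beta> (Suc n)" for n
  proof -
    have "(\<Sum>k\<le>Suc n. G (k, Suc n - k)) = (\<Sum>k\<le>Suc n. bailey_coeff a q (Suc n) * (\<alpha> k * bailey_weight a q (Suc n) k))"
      by (intro sum.cong) (auto simp: G_def bailey_double_term_def mult_ac)
    also have "\<dots> = bailey_coeff a q (Suc n) * \<beta> (Suc n)"
      unfolding sum_distrib_left[symmetric] bailey_pair_beta[OF hbp zero_less_Suc] ..
    finally show ?thesis .
  qed
  then have "(\<lambda>n. bailey_coeff a q (Suc n) * \<beta> (Suc n)) sums (\<Sum>\<^sub>\<infinity>p. G p)"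
    using double_series_rows_diagonals(3)[OF G] sums_Suc_iff[of "\<lambda>n. \<Sum>k\<le>n. G (k, n - k)"]
    by (simp add: G_def bailey_double_term_def)
  ultimately show ?thesis
    by (simp add: sums_iff)
qed

section \<open>Evaluation as a Lambert series\<close>

lemma power_tri_bounded_tendsto_zero:
  fixes v :: "nat \<Rightarrow> 'a :: real_normed_vector"
  assumes "\<And>N. N \<ge> 1 \<Longrightarrow> norm (v N) \<le> C * (L ^ N * r ^ tri N)" "0 \<le> L" "0 \<le> r" "r < 1"
  shows "v \<longlonglongrightarrow> 0"
proof (rule Lim_null_comparison)
  show "\<forall>\<^sub>F N in sequentially. norm (v N) \<le> C * (L ^ N * r ^ tri N)"
    using assms(1) by (auto simp: eventually_sequentially)
  have "(\<lambda>N. L ^ N * r ^ tri N) \<longlonglongrightarrow> 0"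
    using assms by (intro summable_LIMSEQ_zero summable_power_tri)
  then show "(\<lambda>N. C * (L ^ N * r ^ tri N)) \<longlonglongrightarrow> 0"
    using tendsto_mult_left[of _ 0 sequentially C] by simp
qed

lemma sums_double_telescoping:
  fixes F v :: "nat \<Rightarrow> nat \<Rightarrow> complex"
  assumes bound: "\<And>k n. norm (F k n) \<le> C * r ^ k * e n" and "summable e" "0 \<le> r" "r < 1"
    and diff: "\<And>k n. F k n - F (Suc k) n = v k (Suc n) - v k (Suc (Suc n))"
    and lim: "\<And>k. v k \<longlonglongrightarrow> 0"
  shows "(\<lambda>k. v k 1) sums suminf (F 0)"
proof -
  have abs: "summable (\<lambda>n. norm (F k n))" for k
    by (rule summable_comparison_test'[OF summable_mult[OF \<open>summable e\<close>, of "C * r ^ k"]])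
      (use bound in simp)
  then have "summable (F k)" for k
    by (rule summable_norm_cancel)
  then have "(\<lambda>n. F k n - F (Suc k) n) sums (suminf (F k) - suminf (F (Suc k)))" for k
    by (intro sums_diff summable_sums)
  moreover have "(\<lambda>n. F k n - F (Suc k) n) sums (v k 1 - 0)" for k
    unfolding diff One_nat_def by (rule telescope_sums'[OF LIMSEQ_Suc[OF lim]])
  ultimately have step: "suminf (F k) - suminf (F (Suc k)) = v k 1" for k
    using sums_unique2 by (metis diff_zero)
  have norm_suminf: "norm (suminf (F k)) \<le> C * suminf e * r ^ k" for k
  proof -
    have "norm (suminf (F k)) \<le> (\<Sum>n. C * r ^ k * e n)"
      using summable_norm[OF abs] suminf_le[OF bound abs summable_mult[OF \<open>summable e\<close>]]
      by (rule order_trans)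
    also have "\<dots> = C * suminf e * r ^ k"
      using suminf_mult[OF \<open>summable e\<close>, of "C * r ^ k"] by (simp add: mult_ac)
    finally show ?thesis .
  qed
  have "\<forall>\<^sub>F k in sequentially. norm (suminf (F k)) \<le> C * suminf e * r ^ k"
    by (intro always_eventually allI norm_suminf)
  moreover have "(\<lambda>k. C * suminf e * r ^ k) \<longlonglongrightarrow> 0"
    using tendsto_mult_left[OF LIMSEQ_power_zero[of r], of "C * suminf e"] assms by simp
  ultimately have "(\<lambda>k. suminf (F k)) \<longlonglongrightarrow> 0"
    by (rule Lim_null_comparison)
  then have "(\<lambda>k. suminf (F k) - suminf (F (Suc k))) sums (suminf (F 0) - 0)"
    by (rule telescope_sums')
  then show ?thesis
    by (simp add: step)
qed

definition f2_second_term :: "complex \<Rightarrow> complex \<Rightarrow> nat \<Rightarrow> complex" where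
  "f2_second_term q x n = q ^ tri (Suc n) * (- x) ^ Suc n / (qpoch (q * x) q (Suc n) * (1 - q ^ Suc n))"

lemma f2_second_term_telescoping:
  assumes "norm q < 1" "norm (q * x) < 1"
  shows "f2_second_term q x n - f2_second_term q (x * q) n
       = (- x) ^ Suc n * q ^ tri (Suc n) / qpoch (q * x) q (Suc n)
         - (- x) ^ Suc (Suc n) * q ^ tri (Suc (Suc n)) / qpoch (q * x) q (Suc (Suc n))"
proof -
  define N y where "N = Suc n" and "y = q ^ N"
  define P Z where "P = qpoch (q * x) q N" and "Z = (- x) ^ N * q ^ tri N"
  define t w where "t = 1 - q * x" and "w = 1 - q * x * y"
  have nonzero: "P \<noteq> 0" "t \<noteq> 0" "w \<noteq> 0" "1 - y \<noteq> 0"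
    using qpoch_nonzero[OF assms] assms one_minus_mult_power_nonzero[of q "q * x" "Suc n"]
      one_minus_mult_power_nonzero[of q "q * x" 0] one_minus_mult_power_nonzero[of q q n]
    unfolding P_def t_def w_def y_def N_def by (auto simp: mult_ac)
  have "t * qpoch (q * (x * q)) q N = P * w"
    using qpoch_Suc_left[of "q * x" q N] qpoch_Suc[of "q * x" q N]
    unfolding P_def t_def w_def y_def by (simp add: mult_ac)
  then have shifted: "qpoch (q * (x * q)) q N = P * w / t"
    using nonzero by (simp add: field_simps)
  have neg: "(- (x * q)) ^ N = (- x) ^ N * y"
    unfolding y_def by (metis minus_mult_left power_mult_distrib)
  have "f2_second_term q x n = Z / (P * (1 - y))"
    unfolding f2_second_term_def P_def Z_def y_def N_def by (simp add: mult_ac)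
  moreover have "f2_second_term q (x * q) n = Z * y / (P * w / t * (1 - y))"
    unfolding f2_second_term_def N_def[symmetric] neg shifted[symmetric] by (simp add: Z_def y_def mult_ac)
  moreover have "(- x) ^ N * q ^ tri N / qpoch (q * x) q N = Z / P"
    unfolding P_def Z_def ..
  moreover have "(- x) ^ Suc N * q ^ tri (Suc N) / qpoch (q * x) q (Suc N) = Z * (- x) * (y * q) / (P * w)"
    unfolding P_def Z_def w_def y_def by (simp add: qpoch_Suc tri_Suc power_add mult_ac)
  moreover have "Z / (P * (1 - y)) - Z * y / (P * w / t * (1 - y)) = Z / P - Z * (- x) * (y * q) / (P * w)"
    using nonzero t_def w_def by (simp add: divide_simps) (simp add: algebra_simps)
  ultimately show ?thesis
    unfolding N_def[symmetric] by (simp only:)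
qed

lemma norm_mult_power_pow_le:
  fixes x q :: "'a :: real_normed_div_algebra"
  assumes "norm q \<le> 1"
  shows "norm (x * q ^ k) ^ Suc n \<le> norm x ^ Suc n * norm q ^ k"
proof -
  have "(norm q ^ k) ^ Suc n \<le> (norm q ^ k) ^ 1"
    using assms by (intro power_decreasing) (auto simp: power_le_one)
  then show ?thesis
    by (simp add: norm_mult norm_power power_mult_distrib mult_left_mono del: power_Suc)
qed

lemma norm_mult_power_Suc_le:
  fixes x q :: "'a :: real_normed_div_algebra"
  assumes "norm q \<le> 1"
  shows "norm (x * q ^ Suc m) \<le> norm (x * q)"
  using norm_mult_power_le[OF assms, of "x * q" m] by (simp add: mult_ac)

lemma summable_power_tri_Suc:
  fixes L r :: real
  assumes "0 \<le> L" "0 \<le> r" "r < 1"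
  shows "summable (\<lambda>n. L ^ Suc n * r ^ tri (Suc n))"
  using summable_power_tri[OF assms] summable_Suc_iff[of "\<lambda>n. L ^ n * r ^ tri n"] by simp

lemma norm_f2_second_term_le:
  assumes "norm q < 1" "norm (a * q) < 1"
  obtains C where
    "\<And>k n. norm (f2_second_term q (a * q ^ k) n) \<le> C * norm q ^ k * (norm a ^ Suc n * norm q ^ tri (Suc n))"
proof -
  obtain \<delta> where "\<delta> > 0" and \<delta>: "\<And>x n. norm x \<le> norm (a * q) \<Longrightarrow> \<delta> \<le> norm (qpoch x q n)"
    using qpoch_bounded_below[OF assms] by blast
  have "norm (f2_second_term q (a * q ^ k) n)
      \<le> 1 / (\<delta> * (1 - norm q)) * norm q ^ k * (norm a ^ Suc n * norm q ^ tri (Suc n))" for k n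
  proof -
    have "norm (q * (a * q ^ k)) \<le> norm (a * q)"
      using norm_mult_power_le[of q "a * q" k] assms by (simp add: mult_ac)
    then have "\<delta> \<le> norm (qpoch (q * (a * q ^ k)) q (Suc n))"
      by (rule \<delta>)
    then have "norm (f2_second_term q (a * q ^ k) n)
        \<le> norm q ^ tri (Suc n) * (norm a ^ Suc n * norm q ^ k) / (\<delta> * (1 - norm q))"
      unfolding f2_second_term_def norm_divide norm_mult norm_power
      using norm_one_minus_mult_power_ge[of q q n] norm_mult_power_pow_le[of q a k n] \<open>\<delta> > 0\<close> assms
      by (intro frac_le mult_left_mono mult_mono mult_pos_pos) auto
    then show ?thesis
      by (simp add: field_simps)
  qed
  then show thesis
    by (rule that)
qed

lemma f2_second_term_remainder_tendsto_zero:
  assumes "norm q < 1" "norm (q * x) < 1"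
  shows "(\<lambda>N. (- x) ^ N * q ^ tri N / qpoch (q * x) q N) \<longlonglongrightarrow> 0"
proof -
  obtain \<delta> where "\<delta> > 0" and \<delta>: "\<And>y n. norm y \<le> norm (q * x) \<Longrightarrow> \<delta> \<le> norm (qpoch y q n)"
    using qpoch_bounded_below[OF assms] by blast
  show ?thesis
  proof (rule power_tri_bounded_tendsto_zero)
    show "norm ((- x) ^ N * q ^ tri N / qpoch (q * x) q N) \<le> 1 / \<delta> * (norm x ^ N * norm q ^ tri N)" for N
      unfolding norm_divide norm_mult norm_power norm_minus_cancel
      using \<delta>[OF order_refl, of N] \<open>\<delta> > 0\<close> by (simp, intro divide_left_mono mult_pos_pos, auto)
  qed (use assms in auto)
qed

lemma f2_second_term_lambert:
  assumes hq: "norm q < 1" and haq: "norm (a * q) < 1"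
  shows "(\<lambda>k. - (a * q ^ Suc k / (1 - a * q ^ Suc k))) sums suminf (f2_second_term q a)"
proof -
  obtain C where bound:
    "\<And>k n. norm (f2_second_term q (a * q ^ k) n) \<le> C * norm q ^ k * (norm a ^ Suc n * norm q ^ tri (Suc n))"
    using norm_f2_second_term_le[OF hq haq] by blast
  define v where "v k N = (- (a * q ^ k)) ^ N * q ^ tri N / qpoch (q * (a * q ^ k)) q N" for k N
  have small: "norm (q * (a * q ^ k)) < 1" for k
    using norm_mult_power_le[of q "a * q" k] hq haq by (simp add: mult_ac)
  have "f2_second_term q (a * q ^ k) n - f2_second_term q (a * q ^ Suc k) n = v k (Suc n) - v k (Suc (Suc n))"
    for k n
    using f2_second_term_telescoping[OF hq small, of k n] unfolding v_def by (simp add: mult_ac)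
  moreover have "v k \<longlonglongrightarrow> 0" for k
    unfolding v_def by (rule f2_second_term_remainder_tendsto_zero[OF hq small])
  ultimately have "(\<lambda>k. v k 1) sums suminf (f2_second_term q (a * q ^ 0))"
    using hq by (intro sums_double_telescoping[where F="\<lambda>k. f2_second_term q (a * q ^ k)", OF bound
          summable_power_tri_Suc]) auto
  moreover have "v k 1 = - (a * q ^ Suc k / (1 - a * q ^ Suc k))" for k
    by (simp add: v_def tri_def qpoch_Suc mult_ac)
  ultimately show ?thesis
    by simp
qed

definition f2_first_term :: "complex \<Rightarrow> complex \<Rightarrow> nat \<Rightarrow> complex" where
  "f2_first_term q x n =
     (1 - x * q ^ (2 * Suc n)) * q ^ (Suc n ^ 2) * x ^ Suc n / ((1 - x * q ^ Suc n) * (1 - q ^ Suc n))"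

lemma f2_first_term_telescoping:
  assumes "norm q < 1" "norm (x * q) < 1"
  shows "f2_first_term q x n - f2_first_term q (x * q) n
       = x ^ Suc n * q ^ (Suc n ^ 2) / (1 - x * q ^ Suc n)
         - x ^ Suc (Suc n) * q ^ (Suc (Suc n) ^ 2) / (1 - x * q ^ Suc (Suc n))"
proof -
  define N y W where "N = Suc n" and "y = q ^ N" and "W = x ^ N * q ^ (N ^ 2)"
  have nonzero: "1 - x * y \<noteq> 0" "1 - x * q * y \<noteq> 0" "1 - y \<noteq> 0"
    using one_minus_mult_power_nonzero[of q "x * q" n] one_minus_mult_power_nonzero[of q "x * q" N]
      one_minus_mult_power_nonzero[of q q n] assms
    unfolding y_def N_def by (auto simp: mult_ac)
  have "f2_first_term q x n = W * (1 - x * y ^ 2) / ((1 - x * y) * (1 - y))"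
    "f2_first_term q (x * q) n = W * (1 - x * q * y ^ 2) * y / ((1 - x * q * y) * (1 - y))"
    unfolding f2_first_term_def W_def y_def N_def[symmetric]
    by (simp_all add: power_mult_distrib power_mult[symmetric] mult.commute[of 2] mult_ac)
  moreover have "x ^ Suc N * q ^ (Suc N ^ 2) / (1 - x * q ^ Suc N) = W * (x * y ^ 2 * q) / (1 - x * q * y)"
    unfolding W_def y_def by (simp add: power2_eq_square power_add power_mult_distrib mult_ac)
  moreover have "W * (1 - x * y ^ 2) / ((1 - x * y) * (1 - y)) - W * (1 - x * q * y ^ 2) * y / ((1 - x * q * y) * (1 - y))
      = W / (1 - x * y) - W * (x * y ^ 2 * q) / (1 - x * q * y)"
    using nonzero by (simp add: divide_simps) (simp add: algebra_simps power2_eq_square)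
  ultimately show ?thesis
    unfolding N_def[symmetric] W_def[symmetric] y_def[symmetric] by (simp only:)
qed

lemma norm_f2_first_term_le:
  assumes "norm q < 1" "norm (a * q) < 1"
  shows "norm (f2_first_term q (a * q ^ k) n)
    \<le> 2 / ((1 - norm (a * q)) * (1 - norm q)) * norm q ^ k * (norm a ^ Suc n * norm q ^ tri (Suc n))"
proof -
  have small: "norm (a * q ^ Suc m) \<le> norm (a * q)" for m
    using assms by (intro norm_mult_power_Suc_le) simp
  have e1: "a * q ^ k * q ^ (2 * Suc n) = a * q ^ Suc (k + 2 * n + 1)"
    by (simp add: power_add mult_ac)
  have num: "norm (1 - a * q ^ k * q ^ (2 * Suc n)) \<le> 2"
    unfolding e1 using norm_triangle_ineq4[of 1 "a * q ^ Suc (k + 2 * n + 1)"] small[of "k + 2 * n + 1"] assms by simp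
  have e2: "a * q ^ k * q ^ Suc n = a * q ^ Suc (k + n)"
    by (simp add: power_add)
  have den: "1 - norm (a * q) \<le> norm (1 - a * q ^ k * q ^ Suc n)"
    unfolding e2 using norm_triangle_ineq2[of 1 "a * q ^ Suc (k + n)"] small[of "k + n"] by simp
  have den': "1 - norm q \<le> norm (1 - q ^ Suc n)"
    using norm_one_minus_mult_power_ge[of q q n] assms by simp
  have square: "norm q ^ (Suc n ^ 2) \<le> norm q ^ tri (Suc n)"
    using assms by (intro power_decreasing tri_le_square) auto
  have "norm (f2_first_term q (a * q ^ k) n) = norm (1 - a * q ^ k * q ^ (2 * Suc n)) * norm q ^ (Suc n ^ 2)
      * norm (a * q ^ k) ^ Suc n / (norm (1 - a * q ^ k * q ^ Suc n) * norm (1 - q ^ Suc n))"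
    by (simp add: f2_first_term_def norm_mult norm_divide norm_power del: power_Suc)
  also have "\<dots> \<le> 2 * norm q ^ tri (Suc n) * (norm a ^ Suc n * norm q ^ k) / ((1 - norm (a * q)) * (1 - norm q))"
    using num den den' square norm_mult_power_pow_le[of q a k n] assms
    by (intro frac_le mult_mono mult_pos_pos) auto
  finally show ?thesis
    by (simp add: field_simps)
qed

lemma f2_first_term_remainder_tendsto_zero:
  fixes x q :: complex
  assumes "norm q < 1" "norm (x * q) < 1"
  shows "(\<lambda>N. x ^ N * q ^ (N ^ 2) / (1 - x * q ^ N)) \<longlonglongrightarrow> 0"
proof (rule power_tri_bounded_tendsto_zero)
  fix N :: nat
  assume "N \<ge> 1"
  then obtain m where "N = Suc m"
    by (cases N) auto
  then have denom: "1 - norm (x * q) \<le> norm (1 - x * q ^ N)"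
    using norm_mult_power_Suc_le[of q x m] norm_triangle_ineq2[of 1 "x * q ^ N"] assms by simp
  have square: "norm q ^ (N ^ 2) \<le> norm q ^ tri N"
    using assms by (intro power_decreasing tri_le_square) auto
  have "norm (x ^ N * q ^ (N ^ 2) / (1 - x * q ^ N)) \<le> norm x ^ N * norm q ^ tri N / (1 - norm (x * q))"
    unfolding norm_divide norm_mult[of "x ^ N"] norm_power
    using denom square assms by (intro frac_le mult_left_mono) auto
  then show "norm (x ^ N * q ^ (N ^ 2) / (1 - x * q ^ N)) \<le> 1 / (1 - norm (x * q)) * (norm x ^ N * norm q ^ tri N)"
    by simp
qed (use assms in auto)

lemma f2_first_term_lambert:
  assumes hq: "norm q < 1" and haq: "norm (a * q) < 1"
  shows "(\<lambda>k. a * q ^ Suc k / (1 - a * q ^ Suc k)) sums suminf (f2_first_term q a)"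
proof -
  define v where "v k N = (a * q ^ k) ^ N * q ^ (N ^ 2) / (1 - a * q ^ k * q ^ N)" for k N
  have small: "norm (a * q ^ k * q) < 1" for k
    using norm_mult_power_le[of q "a * q" k] hq haq by (simp add: mult_ac)
  have "f2_first_term q (a * q ^ k) n - f2_first_term q (a * q ^ Suc k) n = v k (Suc n) - v k (Suc (Suc n))"
    for k n
    using f2_first_term_telescoping[OF hq small, of k n] unfolding v_def by (simp add: mult_ac)
  moreover have "v k \<longlonglongrightarrow> 0" for k
    unfolding v_def by (rule f2_first_term_remainder_tendsto_zero[OF hq small])
  ultimately have "(\<lambda>k. v k 1) sums suminf (f2_first_term q (a * q ^ 0))"
    using hq haq by (intro sums_double_telescoping[where F="\<lambda>k. f2_first_term q (a * q ^ k)",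
          OF norm_f2_first_term_le summable_power_tri_Suc]) auto
  moreover have "v k 1 = a * q ^ Suc k / (1 - a * q ^ Suc k)" for k
    by (simp add: v_def mult_ac)
  ultimately show ?thesis
    by simp
qed

theorem corollary3p2:
  fixes a q :: complex and \<alpha> \<beta> :: "nat \<Rightarrow> complex"
  assumes hq: "norm q < 1"
    and haq: "norm (a * q) < 1"
    and hbp: "bailey_pair a q \<alpha> \<beta>"
    and hden1: "\<And>n. qpoch (a * q) q n \<noteq> 0"
    and hden2: "\<And>n. n \<ge> 1 \<Longrightarrow> 1 - a * q ^ n \<noteq> 0"
    and hden3: "\<And>n. n \<ge> 1 \<Longrightarrow> 1 - q ^ n \<noteq> 0"
    and hconvb: "summable (\<lambda>n. norm (qpoch q q n * (- a) ^ (Suc n) * q ^ (Suc n * (Suc n + 1) div 2) * \<beta> (Suc n)))"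
    and hconva: "summable (\<lambda>n. norm (qpoch q q n * (- a) ^ (Suc n) * q ^ (Suc n * (Suc n + 1) div 2) / qpoch (q * a) q (Suc n) * \<alpha> (Suc n)))"
  shows
    "let S = (\<Sum>n. qpoch q q n * (- a) ^ (Suc n) * q ^ (Suc n * (Suc n + 1) div 2) * \<beta> (Suc n))
           - (\<Sum>n. qpoch q q n * (- a) ^ (Suc n) * q ^ (Suc n * (Suc n + 1) div 2) / qpoch (q * a) q (Suc n) * \<alpha> (Suc n))
     in S = - (\<Sum>n. (1 - a * q ^ (2 * Suc n)) * q ^ (Suc n ^ 2) * a ^ Suc n / ((1 - a * q ^ Suc n) * (1 - q ^ Suc n)))
      \<and> S = (\<Sum>n. q ^ (Suc n * (Suc n + 1) div 2) * (- a) ^ Suc n / (qpoch (q * a) q (Suc n) * (1 - q ^ Suc n)))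
      \<and> S = - (\<Sum>n. a * q ^ Suc n / (1 - a * q ^ Suc n))"
proof -
  have qa: "q * a = a * q"
    by (simp add: mult.commute)
  have eq\<beta>: "qpoch q q n * (- a) ^ Suc n * q ^ (Suc n * (Suc n + 1) div 2) * \<beta> (Suc n)
      = bailey_coeff a q (Suc n) * \<beta> (Suc n)" for n
    by (simp add: bailey_coeff_def tri_def)
  have eq\<alpha>: "qpoch q q n * (- a) ^ Suc n * q ^ (Suc n * (Suc n + 1) div 2) / qpoch (q * a) q (Suc n) * \<alpha> (Suc n)
      = bailey_coeff a q (Suc n) / qpoch (a * q) q (Suc n) * \<alpha> (Suc n)" for n
    by (simp add: bailey_coeff_def tri_def qa)
  have eq_second: "q ^ (Suc n * (Suc n + 1) div 2) * (- a) ^ Suc n / (qpoch (q * a) q (Suc n) * (1 - q ^ Suc n))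
      = f2_second_term q a n" for n
    by (simp add: f2_second_term_def tri_def)
  have eq_first: "(1 - a * q ^ (2 * Suc n)) * q ^ (Suc n ^ 2) * a ^ Suc n / ((1 - a * q ^ Suc n) * (1 - q ^ Suc n))
      = f2_first_term q a n" for n
    by (simp add: f2_first_term_def)
  have row0: "bailey_coeff a q (Suc n) * bailey_weight a q (Suc n) 0 = f2_second_term q a n" for n
    using qpoch_nonzero[OF hq hq, of n]
    by (simp add: bailey_coeff_def bailey_weight_def f2_second_term_def qpoch_Suc qa mult_ac)
  have "summable (\<lambda>n. norm (bailey_coeff a q (Suc n) / qpoch (a * q) q (Suc n) * \<alpha> (Suc n)))"
    using hconva unfolding eq\<alpha> .
  then have "(\<lambda>n. bailey_coeff a q (Suc n) * \<beta> (Suc n)) sums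
      ((\<Sum>n. bailey_coeff a q (Suc n) / qpoch (a * q) q (Suc n) * \<alpha> (Suc n)) + suminf (f2_second_term q a))"
    using bailey_pair_insertion[OF hq haq hbp] unfolding row0 by simp
  then have S: "(\<Sum>n. bailey_coeff a q (Suc n) * \<beta> (Suc n))
      - (\<Sum>n. bailey_coeff a q (Suc n) / qpoch (a * q) q (Suc n) * \<alpha> (Suc n)) = suminf (f2_second_term q a)"
    by (simp add: sums_iff)
  have second: "suminf (f2_second_term q a) = - (\<Sum>n. a * q ^ Suc n / (1 - a * q ^ Suc n))"
    using sums_minus[OF f2_second_term_lambert[OF hq haq]] by (simp add: sums_iff)
  have first: "suminf (f2_first_term q a) = (\<Sum>n. a * q ^ Suc n / (1 - a * q ^ Suc n))"
    using f2_first_term_lambert[OF hq haq] by (simp add: sums_iff)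
  show ?thesis
    unfolding Let_def eq\<alpha> eq\<beta> eq_first eq_second S first second by simp
qed

end
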